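(* Let $p,q\ge0$ be integers and $a_1,\dots,a_p,b_1,\dots,b_q>0$, and let $$F(x)={}_pF_q(a_1,\dots,a_p;b_1,\dots,b_q;x)=1+\sum_{n=1}^\infty\frac{\prod_{k=1}^p(a_k,n)}{\prod_{k=1}^q(b_k,n)}\frac{x^n}{n!},$$ considered on $(-1,1)$ (assuming the series converges there, i.e. $p\le q+1$). Then: (1) If $p=q=0$, then $F(x)=e^x$, which is log-convex. (2) Let $p=q\ge1$. If $a_k\le b_k$ for each $k$, with at least one strict inequality, then $F$ is strictly log-convex on $(0,1)$. If $a_k\ge b_k$ for each $k$, with at least one strict inequality, then $F$ is strictly log-concave on $(0,1)$. (3) If $p>q$ and $a_k\le b_k$ for $k=1,\dots,q$, with at least one strict inequality, then $F$ is strictly log-convex on $(0,1)$. (4) If $1\le p<q$ and $a_k\ge b_k$ for $k=1,\dots,p$, with at least one strict inequality, then $F$ is strictly log-concave on $(0,1)$. (5) If $p=0$ and $q\ge1$, then $F$ is log-concave on $(0,1)$.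
   Context: $(a,0)=1$ and $(a,n)=a(a+1)\cdots(a+n-1)$ for $n\ge1$. *)

theory Defs
  imports "HOL-Analysis.Analysis"
begin

text \<open>Generalized hypergeometric series pFq with parameters a 0, ..., a (p-1)
  and b 0, ..., b (q-1) (0-based indexing of the paper's a_1..a_p, b_1..b_q).
  The n = 0 term equals 1.\<close>
definition hypgeom :: "nat \<Rightarrow> nat \<Rightarrow> (nat \<Rightarrow> real) \<Rightarrow> (nat \<Rightarrow> real) \<Rightarrow> real \<Rightarrow> real" where
  "hypgeom p q a b x =
     (\<Sum>n. (\<Prod>k<p. pochhammer (a k) n) / (\<Prod>k<q. pochhammer (b k) n) * x ^ n / fact n)"

definition strict_convex_on :: "real set \<Rightarrow> (real \<Rightarrow> real) \<Rightarrow> bool" where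
  "strict_convex_on S f \<longleftrightarrow> convex S \<and>
     (\<forall>x\<in>S. \<forall>y\<in>S. x \<noteq> y \<longrightarrow> (\<forall>t::real. 0 < t \<and> t < 1 \<longrightarrow>
        f ((1 - t) * x + t * y) < (1 - t) * f x + t * f y))"

definition strict_concave_on :: "real set \<Rightarrow> (real \<Rightarrow> real) \<Rightarrow> bool" where
  "strict_concave_on S f \<longleftrightarrow> strict_convex_on S (\<lambda>x. - f x)"

definition log_convex_on :: "real set \<Rightarrow> (real \<Rightarrow> real) \<Rightarrow> bool" where
  "log_convex_on S f \<longleftrightarrow> (\<forall>x\<in>S. f x > 0) \<and> convex_on S (\<lambda>x. ln (f x))"
definition log_concave_on :: "real set \<Rightarrow> (real \<Rightarrow> real) \<Rightarrow> bool" where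
  "log_concave_on S f \<longleftrightarrow> (\<forall>x\<in>S. f x > 0) \<and> concave_on S (\<lambda>x. ln (f x))"
definition strict_log_convex_on :: "real set \<Rightarrow> (real \<Rightarrow> real) \<Rightarrow> bool" where
  "strict_log_convex_on S f \<longleftrightarrow> (\<forall>x\<in>S. f x > 0) \<and> strict_convex_on S (\<lambda>x. ln (f x))"
definition strict_log_concave_on :: "real set \<Rightarrow> (real \<Rightarrow> real) \<Rightarrow> bool" where
  "strict_log_concave_on S f \<longleftrightarrow> (\<forall>x\<in>S. f x > 0) \<and> strict_concave_on S (\<lambda>x. ln (f x))"

end

theory Submission
  imports Defs
begin

(* For F(x) = sum c_n x^n with c_n > 0 and radius of convergence at least 1, put
   rho_n = (n + 1) c_(n+1) / c_n. Comparing coefficients gives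
     F(x) F'(y) - F'(x) F(y) = sum_(m<n) c_m c_n (rho_n - rho_m) (x^m y^n - x^n y^m),
   and the last factor is positive for 0 < x < y. So (ln F)' = F'/F is strictly increasing
   (decreasing) on (0,1) whenever rho is, and F is strictly log-convex (log-concave) there.
   For pFq, rho_n = prod (a_k + n) / prod (b_k + n). Pairing a_k with b_k, each quotient
   (a_k + n)/(b_k + n) is nondecreasing if a_k <= b_k and increasing if a_k < b_k, and the
   unpaired factors a_k + n are increasing; exchanging the a_k with the b_k inverts rho. *)

lemma strict_convex_on_realI:
  fixes f f' :: "real \<Rightarrow> real"
  assumes A: "convex A"
    and der: "\<And>x. x \<in> A \<Longrightarrow> (f has_real_derivative f' x) (at x)"
    and mono: "\<And>x y. x \<in> A \<Longrightarrow> y \<in> A \<Longrightarrow> x < y \<Longrightarrow> f' x < f' y"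
  shows "strict_convex_on A f"
proof -
  have chord: "f ((1 - t) * x + t * y) < (1 - t) * f x + t * f y"
    if x: "x \<in> A" and y: "y \<in> A" and "x < y" "0 < t" "t < 1" for x y t
  proof -
    define z where "z = (1 - t) * x + t * y"
    have zx: "z - x = t * (y - x)" and yz: "y - z = (1 - t) * (y - x)"
      by (simp_all add: z_def algebra_simps)
    have "0 < z - x" "0 < y - z"
      unfolding zx yz using that by simp_all
    then have "x < z" "z < y" by simp_all
    have between: "w \<in> A" if "x \<le> w" "w \<le> y" for w
      using A x y that by (intro mem_is_interval_1_I[of A x y w]) (simp_all add: is_interval_convex_1)
    have der': "DERIV f w :> f' w" if "x \<le> w" "w \<le> y" for w
      using der between that by blast
    obtain \<xi> where \<xi>: "x < \<xi>" "\<xi> < z" "f z - f x = (z - x) * f' \<xi>"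
      using MVT2[OF \<open>x < z\<close>, of f f'] der' \<open>z < y\<close> by force
    obtain \<eta> where \<eta>: "z < \<eta>" "\<eta> < y" "f y - f z = (y - z) * f' \<eta>"
      using MVT2[OF \<open>z < y\<close>, of f f'] der' \<open>x < z\<close> by force
    have "f' \<xi> < f' \<eta>"
      using mono between \<xi> \<eta> by simp
    have "(1 - t) * f x + t * f y - f z = t * (f y - f z) - (1 - t) * (f z - f x)"
      by (simp add: algebra_simps)
    also have "\<dots> = t * (1 - t) * (y - x) * (f' \<eta> - f' \<xi>)"
      unfolding \<xi>(3) \<eta>(3) zx yz by (simp add: algebra_simps)
    also have "\<dots> > 0"
      using that \<open>f' \<xi> < f' \<eta>\<close> by simp
    finally show ?thesis unfolding z_def by simp
  qed
  show ?thesis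
    unfolding strict_convex_on_def
  proof (intro conjI A ballI impI allI)
    fix x y t :: real assume "x \<in> A" "y \<in> A" "x \<noteq> y" and t: "0 < t \<and> t < 1"
    show "f ((1 - t) * x + t * y) < (1 - t) * f x + t * f y"
    proof (cases "x < y")
      case True
      then show ?thesis using chord \<open>x \<in> A\<close> \<open>y \<in> A\<close> t by blast
    next
      case False
      then have "y < x" using \<open>x \<noteq> y\<close> by simp
      from chord[OF \<open>y \<in> A\<close> \<open>x \<in> A\<close> this, of "1 - t"] t show ?thesis
        by (simp add: algebra_simps)
    qed
  qed
qed

lemma convex_on_if_strict_convex_on:
  fixes f :: "real \<Rightarrow> real"
  assumes "strict_convex_on A f"
  shows "convex_on A f"
proof (rule convex_onI)
  show "convex A" using assms unfolding strict_convex_on_def by simp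
  fix t x y :: real assume t: "0 < t" "t < 1" and "x \<in> A" "y \<in> A"
  show "f ((1 - t) *\<^sub>R x + t *\<^sub>R y) \<le> (1 - t) * f x + t * f y"
  proof (cases "x = y")
    case True
    then show ?thesis by (simp add: algebra_simps)
  next
    case False
    with assms t \<open>x \<in> A\<close> \<open>y \<in> A\<close> have "f ((1 - t) * x + t * y) < (1 - t) * f x + t * f y"
      unfolding strict_convex_on_def by blast
    then show ?thesis by simp
  qed
qed

lemma log_concave_on_if_strict_log_concave_on:
  "strict_log_concave_on A f \<Longrightarrow> log_concave_on A f"
  unfolding strict_log_concave_on_def log_concave_on_def strict_concave_on_def concave_on_def
  by (simp add: convex_on_if_strict_convex_on)

lemma sum_mult_sum_antisym:
  fixes u v :: "nat \<Rightarrow> 'a::comm_ring_1"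
  shows "(\<Sum>m<N. u m * x^m) * (\<Sum>n<N. v n * y^n) - (\<Sum>m<N. u m * y^m) * (\<Sum>n<N. v n * x^n)
    = (\<Sum>n<N. \<Sum>m<n. (u m * v n - u n * v m) * (x^m * y^n - x^n * y^m))"
proof (induction N)
  case 0
  then show ?case by simp
next
  case (Suc N)
  have "(\<Sum>m<N. (u m * v N - u N * v m) * (x^m * y^N - x^N * y^m))
     = v N * y^N * (\<Sum>m<N. u m * x^m) - v N * x^N * (\<Sum>m<N. u m * y^m)
       - u N * y^N * (\<Sum>m<N. v m * x^m) + u N * x^N * (\<Sum>m<N. v m * y^m)"
    by (simp add: sum_distrib_left sum_subtractf sum.distrib algebra_simps)
  with Suc.IH show ?case by (simp add: algebra_simps)
qed

lemma power_mult_power_less: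
  fixes x y :: "'a::linordered_semidom"
  assumes "0 < x" "x < y" "m < n"
  shows "x^n * y^m < x^m * y^n"
proof -
  obtain k where n: "n = m + Suc k" using \<open>m < n\<close> less_iff_Suc_add by auto
  have "x^Suc k < y^Suc k" using assms by (intro power_strict_mono) auto
  then have "(x^m * y^m) * x^Suc k < (x^m * y^m) * y^Suc k"
    using assms by (intro mult_strict_left_mono) auto
  then show ?thesis unfolding n power_add by (simp add: ac_simps)
qed

locale pos_power_series =
  fixes c :: "nat \<Rightarrow> real"
  assumes coeff_pos: "\<And>n. 0 < c n"
    and summable_coeff: "\<And>z. norm z < 1 \<Longrightarrow> summable (\<lambda>n. c n * z ^ n)"
begin

definition S :: "real \<Rightarrow> real" where "S z = (\<Sum>n. c n * z ^ n)"
definition S' :: "real \<Rightarrow> real" where "S' z = (\<Sum>n. diffs c n * z ^ n)"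
definition \<rho> :: "nat \<Rightarrow> real" where "\<rho> n = diffs c n / c n"

lemma S_pos:
  assumes "0 \<le> x" "x < 1"
  shows "0 < S x"
  unfolding S_def
proof (rule suminf_pos2[where i = 0])
  show "summable (\<lambda>n. c n * x ^ n)" using assms by (intro summable_coeff) simp
  show "0 \<le> c n * x ^ n" for n using assms coeff_pos[of n] by simp
  show "0 < c 0 * x ^ 0" using coeff_pos[of 0] by simp
qed

lemma summable_diffs: "norm z < 1 \<Longrightarrow> summable (\<lambda>n. diffs c n * z ^ n)"
  by (rule termdiff_converges[OF _ summable_coeff])

lemma has_real_derivative_S: "norm z < 1 \<Longrightarrow> (S has_real_derivative S' z) (at z)"
  unfolding S_def[abs_def] S'_def by (rule termdiffs_strong'[OF summable_coeff])

lemma has_real_derivative_ln_S: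
  "0 \<le> x \<Longrightarrow> x < 1 \<Longrightarrow> ((\<lambda>x. ln (S x)) has_real_derivative S' x / S x) (at x)"
  using S_pos has_real_derivative_S[of x] by (auto intro!: derivative_eq_intros)

lemma cross_difference_sums:
  assumes "norm x < 1" "norm y < 1"
  shows "(\<lambda>n. \<Sum>m<n. c m * c n * (\<rho> n - \<rho> m) * (x^m * y^n - x^n * y^m))
           sums (S x * S' y - S y * S' x)"
proof -
  have coeff_cross: "c m * diffs c n - c n * diffs c m = c m * c n * (\<rho> n - \<rho> m)" for m n
    using coeff_pos[of m] coeff_pos[of n] by (simp add: \<rho>_def field_simps)
  have "(\<lambda>N. (\<Sum>m<N. c m * x^m) * (\<Sum>n<N. diffs c n * y^n)
             - (\<Sum>m<N. c m * y^m) * (\<Sum>n<N. diffs c n * x^n))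
        \<longlonglongrightarrow> S x * S' y - S y * S' x"
    unfolding S_def S'_def using assms
    by (intro tendsto_diff tendsto_mult summable_LIMSEQ summable_coeff summable_diffs)
  then show ?thesis
    unfolding sums_def sum_mult_sum_antisym coeff_cross .
qed

lemma cross_difference_pos:
  assumes "norm x < 1" "norm y < 1"
    and pos: "\<And>m n. m < n \<Longrightarrow> 0 < (\<rho> n - \<rho> m) * (x^m * y^n - x^n * y^m)"
  shows "0 < S x * S' y - S y * S' x"
proof -
  define T where "T m n = c m * c n * ((\<rho> n - \<rho> m) * (x^m * y^n - x^n * y^m))" for m n
  have T_pos: "0 < T m n" if "m < n" for m n
    unfolding T_def by (intro mult_pos_pos coeff_pos pos that)
  have sums: "(\<lambda>n. \<Sum>m<n. T m n) sums (S x * S' y - S y * S' x)"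
    using cross_difference_sums[OF assms(1,2)] unfolding T_def mult.assoc .
  have "0 < (\<Sum>n. \<Sum>m<n. T m n)"
  proof (rule suminf_pos2)
    show "summable (\<lambda>n. \<Sum>m<n. T m n)" using sums by (rule sums_summable)
    show "0 \<le> (\<Sum>m<n. T m n)" for n using T_pos by (intro sum_nonneg) (simp add: less_imp_le)
    show "0 < (\<Sum>m<1. T m 1)" using T_pos by simp
  qed
  with sums show ?thesis by (simp add: sums_iff)
qed

lemma log_deriv_less_iff:
  assumes "0 \<le> x" "x < 1" "0 \<le> y" "y < 1"
  shows "S' x / S x < S' y / S y \<longleftrightarrow> 0 < S x * S' y - S y * S' x"
  using S_pos[OF assms(1,2)] S_pos[OF assms(3,4)] by (simp add: divide_less_eq less_divide_eq ac_simps)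

lemma log_deriv_strict_mono:
  assumes "strict_mono \<rho>" "0 < x" "x < y" "y < 1"
  shows "S' x / S x < S' y / S y"
proof -
  have "0 < (\<rho> n - \<rho> m) * (x^m * y^n - x^n * y^m)" if "m < n" for m n
    using strict_monoD[OF assms(1) that] power_mult_power_less[OF assms(2,3) that] by simp
  with assms have "0 < S x * S' y - S y * S' x"
    by (intro cross_difference_pos) auto
  with assms show ?thesis
    by (subst log_deriv_less_iff) auto
qed

lemma log_deriv_strict_antimono:
  assumes "strict_antimono_on UNIV \<rho>" "0 < x" "x < y" "y < 1"
  shows "S' y / S y < S' x / S x"
proof -
  have "0 < (\<rho> n - \<rho> m) * (y^m * x^n - y^n * x^m)" if "m < n" for m n
  proof (rule mult_neg_neg)
    show "\<rho> n - \<rho> m < 0" using monotone_onD[OF assms(1) _ _ that] by simp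
    show "y^m * x^n - y^n * x^m < 0"
      using power_mult_power_less[OF assms(2,3) that] by (simp add: mult.commute)
  qed
  with assms have "0 < S y * S' x - S x * S' y"
    by (intro cross_difference_pos) auto
  with assms show ?thesis
    by (subst log_deriv_less_iff) auto
qed

lemma strict_log_convex_on_S:
  assumes "strict_mono \<rho>"
  shows "strict_log_convex_on {0<..<1} S"
  unfolding strict_log_convex_on_def
proof (intro conjI ballI strict_convex_on_realI)
  show "0 < S x" if "x \<in> {0<..<1}" for x using that S_pos by simp
  show "((\<lambda>x. ln (S x)) has_real_derivative S' x / S x) (at x)" if "x \<in> {0<..<1}" for x
    using that by (intro has_real_derivative_ln_S) auto
  show "S' x / S x < S' y / S y" if "x \<in> {0<..<1}" "y \<in> {0<..<1}" "x < y" for x y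
    using that by (intro log_deriv_strict_mono[OF assms]) auto
qed simp

lemma strict_log_concave_on_S:
  assumes "strict_antimono_on UNIV \<rho>"
  shows "strict_log_concave_on {0<..<1} S"
  unfolding strict_log_concave_on_def strict_concave_on_def
proof (intro conjI ballI strict_convex_on_realI)
  show "0 < S x" if "x \<in> {0<..<1}" for x using that S_pos by simp
  show "((\<lambda>x. - ln (S x)) has_real_derivative - (S' x / S x)) (at x)" if "x \<in> {0<..<1}" for x
    using that by (intro has_real_derivative_ln_S DERIV_minus) auto
  show "- (S' x / S x) < - (S' y / S y)" if "x \<in> {0<..<1}" "y \<in> {0<..<1}" "x < y" for x y
    using that log_deriv_strict_antimono[OF assms, of x y] by simp
qed simp

end

lemma shifted_quotient_le:
  fixes a b s t :: real
  assumes "0 < a" "a \<le> b" "0 \<le> s" "s \<le> t"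
  shows "(a + s) / (b + s) \<le> (a + t) / (b + t)"
proof -
  have "0 \<le> (b - a) * (t - s)" using assms by simp
  then have "(a + s) * (b + t) \<le> (a + t) * (b + s)" by (simp add: algebra_simps)
  with assms show ?thesis by (simp add: divide_simps)
qed

lemma shifted_quotient_less:
  fixes a b s t :: real
  assumes "0 < a" "a < b" "0 \<le> s" "s < t"
  shows "(a + s) / (b + s) < (a + t) / (b + t)"
proof -
  have "0 < (b - a) * (t - s)" using assms by simp
  then have "(a + s) * (b + t) < (a + t) * (b + s)" by (simp add: algebra_simps)
  with assms show ?thesis by (simp add: divide_simps)
qed

lemma hypgeom_0_0: "hypgeom 0 0 a b = exp"
  unfolding hypgeom_def exp_def by (simp add: fun_eq_iff scaleR_conv_of_real divide_inverse mult.commute)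

locale hypergeometric =
  fixes p q :: nat and a b :: "nat \<Rightarrow> real"
  assumes a_pos: "\<And>k. k < p \<Longrightarrow> 0 < a k"
    and b_pos: "\<And>k. k < q \<Longrightarrow> 0 < b k"
begin

definition hg_coeff :: "nat \<Rightarrow> real" where
  "hg_coeff n = (\<Prod>k<p. pochhammer (a k) n) / (\<Prod>k<q. pochhammer (b k) n) / fact n"

definition hg_ratio :: "nat \<Rightarrow> real" where
  "hg_ratio n = (\<Prod>k<p. a k + n) / (\<Prod>k<q. b k + n)"

lemma hypgeom_eq_suminf: "hypgeom p q a b x = (\<Sum>n. hg_coeff n * x ^ n)"
  unfolding hypgeom_def hg_coeff_def by (simp add: field_simps)

lemma pochhammer_prods_pos:
  "0 < (\<Prod>k<p. pochhammer (a k) n)" "0 < (\<Prod>k<q. pochhammer (b k) n)"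
  using a_pos b_pos by (auto intro!: prod_pos pochhammer_pos)

lemma hg_coeff_pos: "0 < hg_coeff n"
  unfolding hg_coeff_def using pochhammer_prods_pos by simp

lemma hg_ratio_pos: "0 < hg_ratio n"
  unfolding hg_ratio_def using a_pos b_pos by (auto intro!: divide_pos_pos prod_pos add_pos_nonneg)

lemma hg_coeff_Suc: "hg_coeff (Suc n) = hg_ratio n * hg_coeff n / Suc n"
proof -
  have "(\<Prod>k<p. pochhammer (a k) (Suc n)) = (\<Prod>k<p. a k + n) * (\<Prod>k<p. pochhammer (a k) n)"
    "(\<Prod>k<q. pochhammer (b k) (Suc n)) = (\<Prod>k<q. b k + n) * (\<Prod>k<q. pochhammer (b k) n)"
    by (simp_all add: pochhammer_rec' prod.distrib)
  moreover have "0 < (\<Prod>k<q. b k + n)"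
    using b_pos by (intro prod_pos) (simp add: add_pos_nonneg)
  ultimately show ?thesis
    using pochhammer_prods_pos[of n] unfolding hg_coeff_def hg_ratio_def by (simp add: field_simps)
qed

lemma diffs_hg_coeff: "diffs hg_coeff n = hg_ratio n * hg_coeff n"
  unfolding diffs_def hg_coeff_Suc by (simp del: of_nat_Suc)

lemma hg_ratio_div_Suc_le:
  assumes "p \<le> Suc q" "0 < n"
  shows "hg_ratio n / Suc n \<le> (1 + (\<Sum>k<p. a k) / n) ^ Suc q"
proof -
  let ?A = "\<Sum>k<p. a k"
  have A: "0 \<le> ?A" using a_pos by (intro sum_nonneg) (simp add: less_imp_le)
  have "0 \<le> a k + n \<and> a k + n \<le> ?A + n" if "k < p" for k
  proof
    show "0 \<le> a k + n" using a_pos[OF that] by simp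
    have "a k \<le> ?A" using a_pos that by (intro member_le_sum) (auto intro: less_imp_le)
    then show "a k + n \<le> ?A + n" by simp
  qed
  then have "(\<Prod>k<p. a k + n) \<le> (\<Prod>k<p. ?A + n)"
    by (intro prod_mono) simp
  also have "\<dots> = (?A + n) ^ p" by simp
  also have "\<dots> \<le> (?A + n) ^ Suc q" using A assms by (intro power_increasing) auto
  finally have num: "(\<Prod>k<p. a k + n) \<le> (?A + n) ^ Suc q" .
  have "real n ^ q \<le> (\<Prod>k<q. b k + n)"
    using b_pos prod_mono[of "{..<q}" "\<lambda>_. real n" "\<lambda>k. b k + n"] by (simp add: less_imp_le)
  then have den: "real n ^ Suc q \<le> (\<Prod>k<q. b k + n) * Suc n"
    by (simp add: mult_mono mult.commute)
  have "hg_ratio n / Suc n = (\<Prod>k<p. a k + n) / ((\<Prod>k<q. b k + n) * Suc n)"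
    by (simp add: hg_ratio_def)
  also have "\<dots> \<le> (?A + n) ^ Suc q / real n ^ Suc q"
    using A assms by (intro frac_le[OF _ num _ den]) simp_all
  also have "\<dots> = ((?A + n) / n) ^ Suc q"
    by (rule power_divide[symmetric])
  also have "\<dots> = (1 + ?A / n) ^ Suc q"
    using assms by (simp add: add_divide_distrib add.commute del: power_Suc)
  finally show ?thesis .
qed

lemma summable_hg_coeff:
  assumes "p \<le> Suc q" "norm z < 1"
  shows "summable (\<lambda>n. hg_coeff n * z ^ n)"
proof -
  define \<theta> where "\<theta> = (1 + norm z) / 2"
  have "norm z < \<theta>" "\<theta> < 1" using assms by (simp_all add: \<theta>_def)
  have "(\<lambda>n. (1 + (\<Sum>k<p. a k) / n) ^ Suc q * norm z) \<longlonglongrightarrow> (1 + 0) ^ Suc q * norm z"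
    by (intro tendsto_intros)
  with \<open>norm z < \<theta>\<close> have "\<forall>\<^sub>F n in sequentially. (1 + (\<Sum>k<p. a k) / n) ^ Suc q * norm z < \<theta>"
    by (intro order_tendstoD) auto
  then obtain N :: nat where N: "\<And>n. N \<le> n \<Longrightarrow> (1 + (\<Sum>k<p. a k) / n) ^ Suc q * norm z < \<theta>"
    unfolding eventually_sequentially by blast
  show ?thesis
  proof (rule summable_ratio_test[OF \<open>\<theta> < 1\<close>, where N = "Suc N"])
    fix n assume n: "Suc N \<le> n"
    have "hg_ratio n / Suc n * norm z \<le> (1 + (\<Sum>k<p. a k) / n) ^ Suc q * norm z"
      using hg_ratio_div_Suc_le[OF assms(1)] n by (intro mult_right_mono) auto
    also have "\<dots> < \<theta>" using N n by simp
    finally have "hg_ratio n / Suc n * norm z * norm (hg_coeff n * z ^ n) \<le> \<theta> * norm (hg_coeff n * z ^ n)"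
      by (intro mult_right_mono) simp_all
    moreover have "norm (hg_coeff (Suc n) * z ^ Suc n) = hg_ratio n / Suc n * norm z * norm (hg_coeff n * z ^ n)"
      using hg_coeff_pos[of n] hg_ratio_pos[of n]
      unfolding hg_coeff_Suc by (simp add: abs_mult power_abs mult_ac)
    ultimately show "norm (hg_coeff (Suc n) * z ^ Suc n) \<le> \<theta> * norm (hg_coeff n * z ^ n)"
      by simp
  qed
qed

lemma pos_power_series_hg_coeff: "p \<le> Suc q \<Longrightarrow> pos_power_series hg_coeff"
  by unfold_locales (simp_all add: hg_coeff_pos summable_hg_coeff)

lemma hg_ratio_eq_prod:
  assumes "q \<le> p"
  shows "hg_ratio n = (\<Prod>k<p. (a k + n) / (if k < q then b k + n else 1))"
proof -
  have "{..<p} \<inter> {k. k < q} = {..<q}" using assms by auto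
  then have "(\<Prod>k<p. if k < q then b k + real n else 1) = (\<Prod>k<q. b k + n)"
    by (simp add: prod.If_cases)
  then show ?thesis
    unfolding hg_ratio_def prod_dividef by simp
qed

lemma strict_mono_hg_ratio:
  assumes "q \<le> p" "\<forall>k<q. a k \<le> b k" "q < p \<or> (\<exists>k<q. a k < b k)"
  shows "strict_mono hg_ratio"
proof (rule strict_monoI)
  fix m n :: nat assume "m < n"
  define f where "f j k = (a k + j) / (if k < q then b k + j else 1)" for j :: nat and k
  have f_pos: "0 < f j k" if "k < p" for j k
    unfolding f_def using that a_pos b_pos by (simp add: add_pos_nonneg)
  have f_le: "f m k \<le> f n k" if "k < p" for k
    unfolding f_def using that assms(2) \<open>m < n\<close> a_pos
    by (auto intro!: shifted_quotient_le divide_right_mono)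
  obtain k0 where "k0 < p" "f m k0 < f n k0"
    using assms(3)
  proof (elim disjE exE conjE)
    assume "q < p"
    with \<open>m < n\<close> show thesis by (intro that[of q]) (simp_all add: f_def)
  next
    fix k assume "k < q" "a k < b k"
    with assms(1) \<open>m < n\<close> a_pos show thesis
      by (intro that[of k]) (simp_all add: f_def shifted_quotient_less)
  qed
  then show "hg_ratio m < hg_ratio n"
    unfolding hg_ratio_eq_prod[OF assms(1)] f_def[symmetric]
    using f_pos f_le by (intro prod_mono_strict) (auto intro: less_imp_le)
qed

lemma strict_antimono_hg_ratio:
  assumes "p \<le> q" "\<forall>k<p. b k \<le> a k" "p < q \<or> (\<exists>k<p. b k < a k)"
  shows "strict_antimono_on UNIV hg_ratio"
proof -
  interpret dual: hypergeometric q p b a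
    by unfold_locales (simp_all add: a_pos b_pos)
  have "strict_mono dual.hg_ratio"
    using assms by (intro dual.strict_mono_hg_ratio) auto
  moreover have "dual.hg_ratio n = inverse (hg_ratio n)" for n
    unfolding dual.hg_ratio_def hg_ratio_def by simp
  ultimately show ?thesis
    using hg_ratio_pos by (auto intro!: monotone_onI dest: strict_monoD)
qed

end

theorem theorem3p15:
  fixes p q :: nat and a b :: "nat \<Rightarrow> real"
  assumes apos: "\<And>k. k < p \<Longrightarrow> a k > 0"
    and bpos: "\<And>k. k < q \<Longrightarrow> b k > 0"
    and conv: "p \<le> q + 1"
  defines "F \<equiv> hypgeom p q a b"
  shows
    "(p = 0 \<and> q = 0 \<longrightarrow>
        (\<forall>x\<in>{-1<..<1}. F x = exp x) \<and> log_convex_on {-1<..<1} F)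
     \<and> (p = q \<and> 1 \<le> p \<and> (\<forall>k<p. a k \<le> b k) \<and> (\<exists>k<p. a k < b k) \<longrightarrow>
          strict_log_convex_on {0<..<1} F)
     \<and> (p = q \<and> 1 \<le> p \<and> (\<forall>k<p. a k \<ge> b k) \<and> (\<exists>k<p. a k > b k) \<longrightarrow>
          strict_log_concave_on {0<..<1} F)
     \<and> (p > q \<and> (\<forall>k<q. a k \<le> b k) \<and> (\<exists>k<q. a k < b k) \<longrightarrow>
          strict_log_convex_on {0<..<1} F)
     \<and> (1 \<le> p \<and> p < q \<and> (\<forall>k<p. a k \<ge> b k) \<and> (\<exists>k<p. a k > b k) \<longrightarrow>
          strict_log_concave_on {0<..<1} F)
     \<and> (p = 0 \<and> 1 \<le> q \<longrightarrow> log_concave_on {0<..<1} F)"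
proof -
  interpret hypergeometric p q a b
    using apos bpos by unfold_locales
  interpret pos_power_series hg_coeff
    using conv by (intro pos_power_series_hg_coeff) simp
  have F_eq: "F = S"
    unfolding F_def S_def by (simp add: fun_eq_iff hypgeom_eq_suminf)
  have \<rho>_eq: "\<rho> = hg_ratio"
  proof
    show "\<rho> n = hg_ratio n" for n
      using hg_coeff_pos[of n] by (simp add: \<rho>_def diffs_hg_coeff)
  qed
  have log_convex: "strict_log_convex_on {0<..<1} F"
    if "q \<le> p" "\<forall>k<q. a k \<le> b k" "q < p \<or> (\<exists>k<q. a k < b k)"
    using strict_log_convex_on_S strict_mono_hg_ratio[OF that] unfolding F_eq \<rho>_eq by blast
  have log_concave: "strict_log_concave_on {0<..<1} F"
    if "p \<le> q" "\<forall>k<p. b k \<le> a k" "p < q \<or> (\<exists>k<p. b k < a k)"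
    using strict_log_concave_on_S strict_antimono_hg_ratio[OF that] unfolding F_eq \<rho>_eq by blast
  show ?thesis
  proof (intro conjI impI)
    assume "p = 0 \<and> q = 0"
    then have "F = exp" unfolding F_def using hypgeom_0_0 by simp
    then show "\<forall>x\<in>{-1<..<1}. F x = exp x" and "log_convex_on {-1<..<1} F"
      by (simp_all add: log_convex_on_def convex_on_ident)
  next
    assume "p = 0 \<and> 1 \<le> q"
    then show "log_concave_on {0<..<1} F"
      by (intro log_concave_on_if_strict_log_concave_on log_concave) auto
  qed (auto intro!: log_convex log_concave)
qed

end
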